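(* Let $\mathfrak{k}$ be a field, $n\ge 2$, $r_1,\dots,r_n$ positive integers, ${\bf B}=\{(i_1,\dots,i_n):1\le i_j\le r_j\}$, and ${\mathcal A}=(x_{i_1\ldots i_n})_{(i_1,\ldots,i_n)\in{\bf B}}$ a box-shaped matrix of distinct indeterminates, with polynomial ring $\mathfrak{k}[{\mathcal A}]$. For $l=1,\dots,n$ let ${\mathcal A}_l=(x_{i_1\ldots i_n})_{(i_1,\ldots,i_n)\in{\bf B},\ i_l<r_l}$, ${\bf B}_l=\{(i_1,\dots,i_n)\in{\bf B}: i_l=r_l\}$, and $I_l=I_2({\mathcal A}_l)\mathfrak{k}[{\mathcal A}]+(x_{i_1\ldots i_n}:(i_1,\dots,i_n)\in{\bf B}_l)$. Then: (a) for any $l\neq s$ in $\{1,\dots,n\}$, $I_l\cap I_s=I_2({\mathcal A})+(x_{i_1\ldots i_n}:(i_1,\dots,i_n)\in{\bf B}_l\cap{\bf B}_s)$; (b) for any distinct $l_1,\dots,l_t\in\{1,\dots,n\}$ with $2\le t\le n$, $\bigcap_{j=1}^t I_{l_j}=I_2({\mathcal A})+(x_{i_1\ldots i_n}:(i_1,\dots,i_n)\in\bigcap_{j=1}^t{\bf B}_{l_j})$.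
   Context: $\mathfrak{k}$ is algebraically closed of characteristic $0$. For a box-shaped matrix $(a_{i_1\ldots i_n})$ indexed by a box of integral points, a $2\times2$ minor about the $l$-th coordinate is $a_{i_1\ldots i_l\ldots i_n}a_{j_1\ldots j_l\ldots j_n}-a_{i_1\ldots i_{l-1}j_li_{l+1}\ldots i_n}a_{j_1\ldots j_{l-1}i_lj_{l+1}\ldots j_n}$ for two index points; the ideal of $2\times2$ minors $I_2(\cdot)$ is generated by the $2\times 2$ minors about all coordinates. *)

theory Defs
  imports Main "HOL-Library.Poly_Mapping"
begin

definition box :: "nat \<Rightarrow> (nat \<Rightarrow> nat) \<Rightarrow> (nat \<Rightarrow> nat) set" where
  "box n r = {p. (\<forall>j. 1 \<le> j \<and> j \<le> n \<longrightarrow> 1 \<le> p j \<and> p j \<le> r j)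
               \<and> (\<forall>j. \<not> (1 \<le> j \<and> j \<le> n) \<longrightarrow> p j = 0)}"

text \<open>Multivariate polynomials over 'k in indeterminates indexed by index points.\<close>
type_synonym 'k mpoly = "((nat \<Rightarrow> nat) \<Rightarrow>\<^sub>0 nat) \<Rightarrow>\<^sub>0 'k"

definition X :: "(nat \<Rightarrow> nat) \<Rightarrow> 'k::comm_ring_1 mpoly" where
  "X p = Poly_Mapping.single (Poly_Mapping.single p 1) 1"

definition polyring :: "(nat \<Rightarrow> nat) set \<Rightarrow> 'k::comm_ring_1 mpoly set" where
  "polyring P = {f. \<forall>m \<in> Poly_Mapping.keys f. Poly_Mapping.keys m \<subseteq> P}"

definition ideal_in :: "'a::comm_ring_1 set \<Rightarrow> 'a set \<Rightarrow> 'a set" where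
  "ideal_in R S = {(\<Sum>g\<in>F. c g * g) | F c. finite F \<and> F \<subseteq> S \<and> (\<forall>g\<in>F. c g \<in> R)}"

definition minor2 :: "nat \<Rightarrow> (nat \<Rightarrow> nat) \<Rightarrow> (nat \<Rightarrow> nat) \<Rightarrow> 'k::comm_ring_1 mpoly" where
  "minor2 l p q = X p * X q - X (p(l := q l)) * X (q(l := p l))"

definition minors2 :: "nat \<Rightarrow> (nat \<Rightarrow> nat) set \<Rightarrow> 'k::comm_ring_1 mpoly set" where
  "minors2 n P = {minor2 l p q | l p q. 1 \<le> l \<and> l \<le> n \<and> p \<in> P \<and> q \<in> P}"

definition boxA :: "nat \<Rightarrow> (nat \<Rightarrow> nat) \<Rightarrow> nat \<Rightarrow> (nat \<Rightarrow> nat) set" where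
  "boxA n r l = {p \<in> box n r. p l < r l}"

definition boxB :: "nat \<Rightarrow> (nat \<Rightarrow> nat) \<Rightarrow> nat \<Rightarrow> (nat \<Rightarrow> nat) set" where
  "boxB n r l = {p \<in> box n r. p l = r l}"

definition Iface :: "nat \<Rightarrow> (nat \<Rightarrow> nat) \<Rightarrow> nat \<Rightarrow> 'k::comm_ring_1 mpoly set" where
  "Iface n r l = ideal_in (polyring (box n r)) (minors2 n (boxA n r l) \<union> X ` boxB n r l)"

end

theory Submission
  imports Defs
begin

text \<open>
  Grade the variable \<open>x\<^sub>p\<close> by the values of its coordinates: \<open>multideg m j v\<close> counts the
  variables of the monomial \<open>m\<close> whose \<open>j\<close>-th coordinate is \<open>v\<close>. The two terms of a
  2\<times>2 minor have the same multidegree; conversely, two monomials in the box variables with the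
  same multidegree are joined by a chain of exchanges along minors, so their difference lies in
  \<open>I\<^sub>2(A)\<close>. Hence a polynomial whose coefficients in each multidegree sum to zero lies in
  \<open>I\<^sub>2(A)\<close>.

  Let \<open>f\<close> lie in every \<open>I\<^sub>l\<close>, \<open>l \<in> L\<close>. A monomial of \<open>f\<close> with a variable on every face
  \<open>B\<^sub>l\<close>, \<open>l \<in> L\<close>, can be exchanged into a multiple of \<open>x\<^sub>p\<close> with \<open>p \<in> \<Inter>\<^sub>l B\<^sub>l\<close>. Every
  other monomial has a multidegree \<open>c\<close> with \<open>c l r\<^sub>l = 0\<close> for some \<open>l \<in> L\<close>, and the sum of
  the coefficients in such a multidegree vanishes on all of \<open>I\<^sub>l\<close>, because minors are balanced
  and the generators \<open>x\<^sub>p\<close>, \<open>p \<in> B\<^sub>l\<close>, raise \<open>c l r\<^sub>l\<close>. So these monomials of \<open>f\<close> add up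
  to an element of \<open>I\<^sub>2(A)\<close>.
\<close>

section \<open>Ideals generated over a subring\<close>

definition subring :: "'a::comm_ring_1 set \<Rightarrow> bool" where
  "subring R \<longleftrightarrow> 0 \<in> R \<and> 1 \<in> R \<and> (\<forall>a\<in>R. - a \<in> R) \<and> (\<forall>a\<in>R. \<forall>b\<in>R. a + b \<in> R \<and> a * b \<in> R)"

lemma subring_closed:
  assumes "subring R"
  shows "0 \<in> R" "1 \<in> R" "a \<in> R \<Longrightarrow> - a \<in> R"
    "a \<in> R \<Longrightarrow> b \<in> R \<Longrightarrow> a + b \<in> R" "a \<in> R \<Longrightarrow> b \<in> R \<Longrightarrow> a * b \<in> R"
  using assms unfolding subring_def by auto

lemma sum_in_subring:
  assumes "subring R" and "\<And>i. i \<in> I \<Longrightarrow> f i \<in> R"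
  shows "sum f I \<in> R"
  using assms(2) by (induction I rule: infinite_finite_induct) (auto intro: subring_closed[OF assms(1)])

lemma ideal_in_0: "0 \<in> ideal_in R S"
  unfolding ideal_in_def by (rule CollectI, rule exI[of _ "{}"]) auto

lemma ideal_in_gen_mult: "a \<in> R \<Longrightarrow> s \<in> S \<Longrightarrow> a * s \<in> ideal_in R S"
  unfolding ideal_in_def by (rule CollectI, rule exI[of _ "{s}"], rule exI[of _ "\<lambda>_. a"]) auto

lemma ideal_in_gen:
  assumes "subring R" and "s \<in> S"
  shows "s \<in> ideal_in R S"
  using ideal_in_gen_mult[OF subring_closed(2)[OF assms(1)] assms(2)] by simp

lemma ideal_in_add:
  assumes R: "subring R" and "f \<in> ideal_in R S" and "h \<in> ideal_in R S"
  shows "f + h \<in> ideal_in R S"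
proof -
  obtain F a where F: "f = (\<Sum>g\<in>F. a g * g)" "finite F" "F \<subseteq> S" "\<forall>g\<in>F. a g \<in> R"
    using \<open>f \<in> ideal_in R S\<close> unfolding ideal_in_def by blast
  obtain H b where H: "h = (\<Sum>g\<in>H. b g * g)" "finite H" "H \<subseteq> S" "\<forall>g\<in>H. b g \<in> R"
    using \<open>h \<in> ideal_in R S\<close> unfolding ideal_in_def by blast
  define a' where "a' g = (if g \<in> F then a g else 0)" for g
  define b' where "b' g = (if g \<in> H then b g else 0)" for g
  have "(\<Sum>g\<in>F \<union> H. a' g * g) = f"
    unfolding F(1) a'_def by (rule sum.mono_neutral_cong_right) (use F H in auto)
  moreover have "(\<Sum>g\<in>F \<union> H. b' g * g) = h"
    unfolding H(1) b'_def by (rule sum.mono_neutral_cong_right) (use F H in auto)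
  ultimately have "f + h = (\<Sum>g\<in>F \<union> H. (a' g + b' g) * g)"
    by (simp add: distrib_right sum.distrib)
  moreover have "\<forall>g\<in>F \<union> H. a' g + b' g \<in> R"
    using F(4) H(4) subring_closed[OF R] unfolding a'_def b'_def by simp
  ultimately show ?thesis
    unfolding ideal_in_def using F(2,3) H(2,3)
    by (intro CollectI exI[of _ "F \<union> H"] exI[of _ "\<lambda>g. a' g + b' g"]) simp
qed

lemma ideal_in_mult:
  assumes R: "subring R" and "a \<in> R" and "f \<in> ideal_in R S"
  shows "a * f \<in> ideal_in R S"
proof -
  obtain F b where F: "f = (\<Sum>g\<in>F. b g * g)" "finite F" "F \<subseteq> S" "\<forall>g\<in>F. b g \<in> R"
    using \<open>f \<in> ideal_in R S\<close> unfolding ideal_in_def by blast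
  have "a * f = (\<Sum>g\<in>F. (a * b g) * g)"
    unfolding F(1) sum_distrib_left by (simp add: mult.assoc)
  moreover have "\<forall>g\<in>F. a * b g \<in> R"
    using \<open>a \<in> R\<close> F(4) subring_closed(5)[OF R] by blast
  ultimately show ?thesis
    unfolding ideal_in_def using F(2,3) by (intro CollectI exI[of _ F] exI[of _ "\<lambda>g. a * b g"]) simp
qed

lemma ideal_in_diff:
  assumes R: "subring R" and "f \<in> ideal_in R S" and "h \<in> ideal_in R S"
  shows "f - h \<in> ideal_in R S"
proof -
  have "- 1 \<in> R"
    using subring_closed[OF R] by blast
  then have "- 1 * h \<in> ideal_in R S"
    using ideal_in_mult[OF R _ \<open>h \<in> ideal_in R S\<close>] by blast
  then show ?thesis
    using ideal_in_add[OF R \<open>f \<in> ideal_in R S\<close>, of "- 1 * h"] by simp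
qed

lemma ideal_in_sum:
  "subring R \<Longrightarrow> (\<And>i. i \<in> I \<Longrightarrow> f i \<in> ideal_in R S) \<Longrightarrow> sum f I \<in> ideal_in R S"
  by (induction I rule: infinite_finite_induct) (auto simp: ideal_in_0 ideal_in_add)

lemma ideal_in_subset_ideal_in:
  assumes R: "subring R" and "S \<subseteq> ideal_in R T"
  shows "ideal_in R S \<subseteq> ideal_in R T"
proof
  fix f assume "f \<in> ideal_in R S"
  then obtain F a where F: "f = (\<Sum>g\<in>F. a g * g)" "F \<subseteq> S" "\<forall>g\<in>F. a g \<in> R"
    unfolding ideal_in_def by blast
  show "f \<in> ideal_in R T"
    unfolding F(1) by (rule ideal_in_sum[OF R]) (use F(2,3) assms(2) ideal_in_mult[OF R] in blast)
qed

lemma ideal_in_mono: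
  assumes "subring R" and "S \<subseteq> T"
  shows "ideal_in R S \<subseteq> ideal_in R T"
  by (rule ideal_in_subset_ideal_in[OF assms(1)]) (use assms ideal_in_gen in blast)

lemma ideal_in_subset:
  assumes R: "subring R" and "S \<subseteq> R"
  shows "ideal_in R S \<subseteq> R"
proof
  fix f assume "f \<in> ideal_in R S"
  then obtain F a where F: "f = (\<Sum>g\<in>F. a g * g)" "F \<subseteq> S" "\<forall>g\<in>F. a g \<in> R"
    unfolding ideal_in_def by blast
  show "f \<in> R"
    unfolding F(1) using F(2,3) assms(2) by (intro sum_in_subring[OF R] subring_closed(5)[OF R]) auto
qed

section \<open>Polynomials and monomials\<close>

lemma keys_add_nat: "Poly_Mapping.keys (a + b) = Poly_Mapping.keys a \<union> Poly_Mapping.keys (b :: 'a \<Rightarrow>\<^sub>0 nat)"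
  by (auto simp: in_keys_iff lookup_add)

lemma subring_polyring: "subring (polyring P :: 'k::comm_ring_1 mpoly set)"
proof -
  have "a * b \<in> polyring P" if a: "a \<in> polyring P" and b: "b \<in> polyring P" for a b :: "'k mpoly"
  proof -
    have "Poly_Mapping.keys m \<subseteq> P" if "m \<in> Poly_Mapping.keys (a * b)" for m
    proof -
      obtain u v where "m = u + v" "u \<in> Poly_Mapping.keys a" "v \<in> Poly_Mapping.keys b"
        using \<open>m \<in> Poly_Mapping.keys (a * b)\<close> keys_mult[of a b] by blast
      then show ?thesis
        using a b keys_add_nat[of u v] unfolding polyring_def by auto
    qed
    then show ?thesis
      unfolding polyring_def by blast
  qed
  moreover have "a + b \<in> polyring P" if "a \<in> polyring P" "b \<in> polyring P" for a b :: "'k mpoly"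
    using that keys_add[of a b] unfolding polyring_def by blast
  moreover have "- a \<in> polyring P" if "a \<in> polyring P" for a :: "'k mpoly"
    using that unfolding polyring_def by simp
  moreover have "0 \<in> polyring P" "1 \<in> polyring P"
    unfolding polyring_def by simp_all
  ultimately show ?thesis
    unfolding subring_def by blast
qed

lemma single_in_polyring: "Poly_Mapping.keys m \<subseteq> P \<Longrightarrow> Poly_Mapping.single m a \<in> polyring P"
  unfolding polyring_def by simp

type_synonym monom = "(nat \<Rightarrow> nat) \<Rightarrow>\<^sub>0 nat"

definition monomial :: "monom \<Rightarrow> 'k::comm_ring_1 mpoly" where
  "monomial m = Poly_Mapping.single m 1"

lemma monomial_add: "monomial (a + b) = monomial a * monomial b"
  by (simp add: monomial_def mult_single)

lemma X_eq_monomial: "X p = monomial (Poly_Mapping.single p 1)"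
  by (simp add: X_def monomial_def)

lemma single_eq_const_mult_monomial:
  "Poly_Mapping.single m a = Poly_Mapping.single 0 a * monomial m"
  by (simp add: monomial_def mult_single)

lemma monomial_in_polyring: "Poly_Mapping.keys m \<subseteq> P \<Longrightarrow> monomial m \<in> polyring P"
  unfolding monomial_def by (rule single_in_polyring)

lemma X_in_polyring: "p \<in> P \<Longrightarrow> X p \<in> polyring P"
  unfolding X_eq_monomial by (rule monomial_in_polyring) simp

lemma sum_single_lookup: "(\<Sum>m\<in>Poly_Mapping.keys f. Poly_Mapping.single m (Poly_Mapping.lookup f m)) = f"
  by (rule poly_mapping_eqI) (simp add: lookup_sum lookup_single when_def in_keys_iff)

lemma single_sum: "Poly_Mapping.single k (sum g A) = (\<Sum>x\<in>A. Poly_Mapping.single k (g x))"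
  using sum_comp_morphism[of "Poly_Mapping.single k" g A] by (simp add: single_add comp_def)

lemma minor2_eq_monomial_diff:
  "minor2 j p q = monomial (Poly_Mapping.single p 1 + Poly_Mapping.single q 1)
     - monomial (Poly_Mapping.single (p(j := q j)) 1 + Poly_Mapping.single (q(j := p j)) 1)"
  by (simp add: minor2_def X_eq_monomial monomial_add)

lemma in_boxD:
  assumes "p \<in> box n r"
  shows "j \<in> {1..n} \<Longrightarrow> 1 \<le> p j \<and> p j \<le> r j" and "j \<notin> {1..n} \<Longrightarrow> p j = 0"
  using assms unfolding box_def by auto

lemma box_upd: "p \<in> box n r \<Longrightarrow> q \<in> box n r \<Longrightarrow> j \<in> {1..n} \<Longrightarrow> p(j := q j) \<in> box n r"
  unfolding box_def by auto

lemma box_eqI: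
  assumes "p \<in> box n r" "q \<in> box n r" "\<And>j. j \<in> {1..n} \<Longrightarrow> p j = q j"
  shows "p = q"
proof
  fix j
  show "p j = q j"
    using assms(3)[of j] in_boxD(2)[OF assms(1), of j] in_boxD(2)[OF assms(2), of j]
    by (cases "j \<in> {1..n}") simp_all
qed

definition I2 :: "nat \<Rightarrow> (nat \<Rightarrow> nat) \<Rightarrow> 'k::comm_ring_1 mpoly set" where
  "I2 n r = ideal_in (polyring (box n r)) (minors2 n (box n r))"

lemma minors2_subset_polyring:
  assumes "P \<subseteq> box n r"
  shows "minors2 n P \<subseteq> polyring (box n r)"
proof
  fix s :: "'k::comm_ring_1 mpoly" assume "s \<in> minors2 n P"
  then obtain j p q where s: "s = minor2 j p q" and "j \<in> {1..n}" "p \<in> box n r" "q \<in> box n r"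
    unfolding minors2_def using assms by auto
  then show "s \<in> polyring (box n r)"
    unfolding s minor2_eq_monomial_diff diff_conv_add_uminus
    by (intro subring_closed[OF subring_polyring] monomial_in_polyring) (auto simp: keys_add_nat box_upd)
qed

lemma single_add_minus_single:
  "p \<in> Poly_Mapping.keys m \<Longrightarrow> Poly_Mapping.single p 1 + (m - Poly_Mapping.single p 1) = (m :: 'a \<Rightarrow>\<^sub>0 nat)"
  by (rule poly_mapping_eqI) (auto simp: lookup_add lookup_minus lookup_single when_def in_keys_iff)

lemma split_two_vars:
  assumes "p \<in> Poly_Mapping.keys m" and "q \<in> Poly_Mapping.keys m" and "p \<noteq> q"
  obtains c where "m = c + Poly_Mapping.single p 1 + Poly_Mapping.single (q :: 'a) (1 :: nat)"
proof -
  define m' where "m' = m - Poly_Mapping.single p 1"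
  have "q \<in> Poly_Mapping.keys m'"
    using assms by (auto simp: m'_def in_keys_iff lookup_minus lookup_single when_def)
  then have "m = Poly_Mapping.single p 1 + (Poly_Mapping.single q 1 + (m' - Poly_Mapping.single q 1))"
    using single_add_minus_single[OF assms(1)] single_add_minus_single[of q m']
    unfolding m'_def by simp
  then show ?thesis
    by (intro that[of "m' - Poly_Mapping.single q 1"]) (simp add: ac_simps)
qed

lemma monomial_induct [case_names zero add_var]:
  assumes "P 0" and "\<And>p m. P m \<Longrightarrow> P (Poly_Mapping.single p 1 + m)"
  shows "P (m :: 'a \<Rightarrow>\<^sub>0 nat)"
proof (induction m rule: update_induct)
  case const
  show ?case by (rule assms(1))
next
  case (update f a b)
  have "P (Poly_Mapping.single a k + f)" for k
  proof (induction k)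
    case 0
    show ?case using update.IH by simp
  next
    case (Suc k)
    then show ?case
      using assms(2)[of "Poly_Mapping.single a k + f" a] single_add[of a 1 k] by (simp add: add.assoc)
  qed
  moreover have "Poly_Mapping.update a b f = Poly_Mapping.single a b + f"
    using update.hyps(1)
    by (intro poly_mapping_eqI) (auto simp: lookup_update lookup_add lookup_single when_def in_keys_iff)
  ultimately show ?case by simp
qed

section \<open>The multigrading\<close>

definition multideg :: "monom \<Rightarrow> nat \<Rightarrow> nat \<Rightarrow> nat" where
  "multideg m j v = (\<Sum>p\<in>Poly_Mapping.keys m. Poly_Mapping.lookup m p when p j = v)"

lemma multideg_zero [simp]: "multideg 0 j v = 0"
  by (simp add: multideg_def)

lemma multideg_add [simp]: "multideg (a + b) j v = multideg a j v + multideg b j v"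
  unfolding multideg_def by (rule setsum_keys_plus_distrib) (simp_all add: when_def)

lemma multideg_single [simp]: "multideg (Poly_Mapping.single p k) j v = (k when p j = v)"
  by (simp add: multideg_def when_def)

lemma multideg_pos_iff: "0 < multideg m j v \<longleftrightarrow> (\<exists>p\<in>Poly_Mapping.keys m. p j = v)"
proof -
  have "multideg m j v = 0 \<longleftrightarrow> (\<forall>p\<in>Poly_Mapping.keys m. p j \<noteq> v)"
    by (simp add: multideg_def when_def in_keys_iff)
  then show ?thesis by auto
qed

lemma multideg_eq_0_imp_zero: "multideg m = (\<lambda>_ _. 0) \<Longrightarrow> m = 0"
  using multideg_pos_iff[of m 0] by (metis keys_eq_empty equals0I less_irrefl)

section \<open>Exchanges along minors\<close>

definition exchange :: "nat \<Rightarrow> (nat \<Rightarrow> nat) \<Rightarrow> monom \<Rightarrow> monom \<Rightarrow> bool" where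
  "exchange n r a b \<longleftrightarrow>
    (\<exists>j p q c. j \<in> {1..n} \<and> p \<in> box n r \<and> q \<in> box n r \<and> Poly_Mapping.keys c \<subseteq> box n r \<and>
     a = c + Poly_Mapping.single p 1 + Poly_Mapping.single q 1 \<and>
     b = c + Poly_Mapping.single (p(j := q j)) 1 + Poly_Mapping.single (q(j := p j)) 1)"

lemma exchange_keys:
  assumes "exchange n r a b"
  shows "Poly_Mapping.keys b \<subseteq> box n r"
  using assms unfolding exchange_def by (auto simp: keys_add_nat box_upd)

lemma exchange_multideg: "exchange n r a b \<Longrightarrow> multideg a = multideg b"
  unfolding exchange_def by (auto simp: fun_eq_iff when_def)

lemma exchange_add_left:
  assumes "Poly_Mapping.keys d \<subseteq> box n r" and "exchange n r a b"
  shows "exchange n r (d + a) (d + b)"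
proof -
  obtain j p q c where "j \<in> {1..n}" "p \<in> box n r" "q \<in> box n r" "Poly_Mapping.keys c \<subseteq> box n r"
    and "a = c + Poly_Mapping.single p 1 + Poly_Mapping.single q 1"
    and "b = c + Poly_Mapping.single (p(j := q j)) 1 + Poly_Mapping.single (q(j := p j)) 1"
    using assms(2) unfolding exchange_def by blast
  then show ?thesis
    unfolding exchange_def using assms(1)
    by (intro exI[of _ j] exI[of _ p] exI[of _ q] exI[of _ "d + c"]) (simp add: keys_add_nat add.assoc)
qed

lemma monomial_diff_in_I2_if_exchange:
  assumes "exchange n r a b"
  shows "monomial a - monomial b \<in> I2 n r"
proof -
  obtain j p q c where "j \<in> {1..n}" "p \<in> box n r" "q \<in> box n r" and c: "Poly_Mapping.keys c \<subseteq> box n r"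
    and "a = c + Poly_Mapping.single p 1 + Poly_Mapping.single q 1"
    and "b = c + Poly_Mapping.single (p(j := q j)) 1 + Poly_Mapping.single (q(j := p j)) 1"
    using assms unfolding exchange_def by blast
  then have diff: "monomial a - monomial b = monomial c * minor2 j p q"
    and minor: "minor2 j p q \<in> minors2 n (box n r)"
    by (auto simp: minor2_eq_monomial_diff monomial_add algebra_simps minors2_def)
  show ?thesis
    unfolding I2_def diff by (rule ideal_in_gen_mult[OF monomial_in_polyring[OF c] minor])
qed

lemma exchanges_keys:
  "(exchange n r)\<^sup>*\<^sup>* a b \<Longrightarrow> Poly_Mapping.keys a \<subseteq> box n r \<Longrightarrow> Poly_Mapping.keys b \<subseteq> box n r"
  by (induction rule: rtranclp_induct) (auto dest: exchange_keys)

lemma exchanges_multideg: "(exchange n r)\<^sup>*\<^sup>* a b \<Longrightarrow> multideg a = multideg b"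
  by (induction rule: rtranclp_induct) (auto dest: exchange_multideg)

lemma exchanges_add_left:
  "(exchange n r)\<^sup>*\<^sup>* a b \<Longrightarrow> Poly_Mapping.keys d \<subseteq> box n r \<Longrightarrow> (exchange n r)\<^sup>*\<^sup>* (d + a) (d + b)"
  by (induction rule: rtranclp_induct) (auto intro: rtranclp.rtrancl_into_rtrancl exchange_add_left)

lemma monomial_diff_in_I2_if_exchanges:
  assumes "(exchange n r)\<^sup>*\<^sup>* a b"
  shows "(monomial a - monomial b :: 'k::comm_ring_1 mpoly) \<in> I2 n r"
  using assms
proof (induction rule: rtranclp_induct)
  case base
  show ?case by (simp add: I2_def ideal_in_0)
next
  case (step b c)
  have "(monomial a - monomial b) + (monomial b - monomial c) \<in> (I2 n r :: 'k mpoly set)"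
    using step.IH monomial_diff_in_I2_if_exchange[OF step.hyps(2)]
    unfolding I2_def by (rule ideal_in_add[OF subring_polyring])
  then show ?case by simp
qed

lemma exchange_coordinate:
  assumes m: "Poly_Mapping.keys m \<subseteq> box n r" and q: "q \<in> Poly_Mapping.keys m"
    and q': "q' \<in> Poly_Mapping.keys m" and "q \<noteq> q'" and j: "j \<in> {1..n}"
  obtains m' where "exchange n r m m'" and "q(j := q' j) \<in> Poly_Mapping.keys m'"
proof -
  obtain c where c: "m = c + Poly_Mapping.single q 1 + Poly_Mapping.single q' 1"
    using split_two_vars[OF q q' \<open>q \<noteq> q'\<close>] .
  then have "q \<in> box n r" "q' \<in> box n r" "Poly_Mapping.keys c \<subseteq> box n r"
    using m by (auto simp: keys_add_nat)
  then have "exchange n r m (c + Poly_Mapping.single (q(j := q' j)) 1 + Poly_Mapping.single (q'(j := q j)) 1)"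
    unfolding exchange_def using c j by blast
  then show ?thesis
    by (rule that) (simp add: keys_add_nat)
qed

lemma exchanges_align_coordinates:
  assumes m: "Poly_Mapping.keys m \<subseteq> box n r" and occurs: "\<And>j. 0 < multideg m j (p j)"
    and "k \<le> n"
  shows "\<exists>m' q. (exchange n r)\<^sup>*\<^sup>* m m' \<and> q \<in> Poly_Mapping.keys m' \<and> (\<forall>j\<in>{1..k}. q j = p j)"
  using \<open>k \<le> n\<close>
proof (induction k)
  case 0
  obtain q where "q \<in> Poly_Mapping.keys m"
    using occurs[of 0] multideg_pos_iff by blast
  then show ?case by auto
next
  case (Suc k)
  then obtain m1 q where m1: "(exchange n r)\<^sup>*\<^sup>* m m1" and q: "q \<in> Poly_Mapping.keys m1"
    and agree: "\<forall>j\<in>{1..k}. q j = p j"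
    by auto
  show ?case
  proof (cases "q (Suc k) = p (Suc k)")
    case True
    then show ?thesis
      using m1 q agree by (auto simp: atLeastAtMostSuc_conv)
  next
    case False
    have "0 < multideg m1 (Suc k) (p (Suc k))"
      using occurs exchanges_multideg[OF m1] by metis
    then obtain q' where q': "q' \<in> Poly_Mapping.keys m1" "q' (Suc k) = p (Suc k)"
      by (auto simp: multideg_pos_iff)
    moreover have "q \<noteq> q'" and "Suc k \<in> {1..n}"
      using False q'(2) Suc.prems by auto
    ultimately obtain m2 where "exchange n r m1 m2" and "q(Suc k := q' (Suc k)) \<in> Poly_Mapping.keys m2"
      using exchange_coordinate[OF exchanges_keys[OF m1 m] q] by blast
    moreover have "\<forall>j\<in>{1..Suc k}. (q(Suc k := q' (Suc k))) j = p j"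
      using agree q'(2) by (auto simp: atLeastAtMostSuc_conv)
    ultimately show ?thesis
      using rtranclp.rtrancl_into_rtrancl[OF m1] by blast
  qed
qed

lemma exchanges_to_var:
  assumes m: "Poly_Mapping.keys m \<subseteq> box n r" and p: "p \<in> box n r"
    and occurs: "\<And>j. 0 < multideg m j (p j)"
  obtains m' where "(exchange n r)\<^sup>*\<^sup>* m (Poly_Mapping.single p 1 + m')"
proof -
  obtain m1 q where m1: "(exchange n r)\<^sup>*\<^sup>* m m1" and q: "q \<in> Poly_Mapping.keys m1"
    and agree: "\<forall>j\<in>{1..n}. q j = p j"
    using exchanges_align_coordinates[OF m occurs order_refl] by blast
  have "q \<in> box n r"
    using exchanges_keys[OF m1 m] q by blast
  then have "q = p"
    using box_eqI[OF _ p] agree by blast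
  then show ?thesis
    using that[of "m1 - Poly_Mapping.single p 1"] m1 single_add_minus_single[OF q] by simp
qed

lemma exchanges_if_multideg_eq:
  assumes "Poly_Mapping.keys a \<subseteq> box n r" and "Poly_Mapping.keys b \<subseteq> box n r"
    and "multideg a = multideg b"
  shows "(exchange n r)\<^sup>*\<^sup>* a b"
  using assms
proof (induction b arbitrary: a rule: monomial_induct)
  case zero
  then have "multideg a = (\<lambda>_ _. 0)"
    by (simp add: fun_eq_iff)
  then have "a = 0"
    by (rule multideg_eq_0_imp_zero)
  then show ?case by simp
next
  case (add_var p b)
  have p: "p \<in> box n r" and b: "Poly_Mapping.keys b \<subseteq> box n r"
    using add_var.prems(2) by (auto simp: keys_add_nat)
  have "0 < multideg a j (p j)" for j
    using add_var.prems(3) by simp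
  then obtain m' where a: "(exchange n r)\<^sup>*\<^sup>* a (Poly_Mapping.single p 1 + m')"
    using exchanges_to_var[OF add_var.prems(1) p] by blast
  have "Poly_Mapping.keys (Poly_Mapping.single p 1 + m') \<subseteq> box n r"
    using exchanges_keys[OF a add_var.prems(1)] .
  then have "Poly_Mapping.keys m' \<subseteq> box n r"
    by (simp add: keys_add_nat)
  moreover have "multideg (Poly_Mapping.single p 1 + m') = multideg (Poly_Mapping.single p 1 + b)"
    using exchanges_multideg[OF a] add_var.prems(3) by (rule trans[OF sym])
  then have "multideg m' = multideg b"
    by (simp add: fun_eq_iff)
  ultimately have "(exchange n r)\<^sup>*\<^sup>* m' b"
    using add_var.IH b by blast
  then have "(exchange n r)\<^sup>*\<^sup>* (Poly_Mapping.single p 1 + m') (Poly_Mapping.single p 1 + b)"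
    by (rule exchanges_add_left) (simp add: p)
  with a show ?case
    by (rule rtranclp_trans)
qed

lemma monomial_diff_in_I2:
  assumes "Poly_Mapping.keys a \<subseteq> box n r" and "Poly_Mapping.keys b \<subseteq> box n r"
    and "multideg a = multideg b"
  shows "(monomial a - monomial b :: 'k::comm_ring_1 mpoly) \<in> I2 n r"
  using monomial_diff_in_I2_if_exchanges exchanges_if_multideg_eq[OF assms] by blast

section \<open>Coefficient sums over a multidegree\<close>

definition coeff_sum :: "(nat \<Rightarrow> nat \<Rightarrow> nat) \<Rightarrow> 'k::comm_ring_1 mpoly \<Rightarrow> 'k" where
  "coeff_sum c f = (\<Sum>m\<in>Poly_Mapping.keys f. Poly_Mapping.lookup f m when multideg m = c)"

lemma coeff_sum_zero [simp]: "coeff_sum c 0 = 0"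
  by (simp add: coeff_sum_def)

lemma coeff_sum_add: "coeff_sum c (f + g) = coeff_sum c f + coeff_sum c g"
  unfolding coeff_sum_def by (rule setsum_keys_plus_distrib) (simp_all add: when_def)

lemma coeff_sum_diff: "coeff_sum c (f - g) = coeff_sum c f - coeff_sum c g"
proof -
  have "coeff_sum c (- g) = - coeff_sum c g"
    unfolding coeff_sum_def by (simp add: sum_negf[symmetric] when_def if_distrib cong: if_cong)
  then show ?thesis
    using coeff_sum_add[of c f "- g"] by simp
qed

lemma coeff_sum_sum: "coeff_sum c (sum f A) = (\<Sum>x\<in>A. coeff_sum c (f x))"
  by (induction A rule: infinite_finite_induct) (simp_all add: coeff_sum_add)

lemma coeff_sum_single [simp]: "coeff_sum c (Poly_Mapping.single m a) = (a when multideg m = c)"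
  by (simp add: coeff_sum_def when_def)

lemma coeff_sum_eq_0: "(\<And>m. m \<in> Poly_Mapping.keys f \<Longrightarrow> multideg m \<noteq> c) \<Longrightarrow> coeff_sum c f = 0"
  unfolding coeff_sum_def by (simp add: when_def)

lemma coeff_sum_mult_monomial:
  "coeff_sum c (g * monomial M)
   = (\<Sum>m\<in>Poly_Mapping.keys g. Poly_Mapping.lookup g m when multideg (m + M) = c)"
proof -
  have "g * monomial M = (\<Sum>m\<in>Poly_Mapping.keys g. Poly_Mapping.single m (Poly_Mapping.lookup g m)) * monomial M"
    by (simp only: sum_single_lookup)
  also have "\<dots> = (\<Sum>m\<in>Poly_Mapping.keys g. Poly_Mapping.single (m + M) (Poly_Mapping.lookup g m))"
    by (simp add: sum_distrib_right monomial_def mult_single)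
  finally show ?thesis
    by (simp add: coeff_sum_sum)
qed

lemma coeff_sum_mult_minor2: "coeff_sum c (g * minor2 j p q) = 0"
proof -
  have "multideg (m + (Poly_Mapping.single p 1 + Poly_Mapping.single q 1))
      = multideg (m + (Poly_Mapping.single (p(j := q j)) 1 + Poly_Mapping.single (q(j := p j)) 1))" for m
    by (auto simp: fun_eq_iff when_def)
  then show ?thesis
    unfolding minor2_eq_monomial_diff right_diff_distrib coeff_sum_diff coeff_sum_mult_monomial
    by simp
qed

lemma coeff_sum_mult_X:
  assumes "c l (p l) = 0"
  shows "coeff_sum c (g * X p) = 0"
proof (rule coeff_sum_eq_0)
  fix m assume "m \<in> Poly_Mapping.keys (g * X p)"
  then obtain u where "m = u + Poly_Mapping.single p 1"
    using keys_mult[of g "X p"] by (auto simp: X_def)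
  then have "multideg m l (p l) \<noteq> 0"
    by simp
  then show "multideg m \<noteq> c"
    using assms by auto
qed

lemma coeff_sum_ideal_in:
  assumes "\<And>g s. s \<in> S \<Longrightarrow> coeff_sum c (g * s) = 0" and "f \<in> ideal_in R S"
  shows "coeff_sum c f = 0"
proof -
  obtain F a where "f = (\<Sum>s\<in>F. a s * s)" "F \<subseteq> S"
    using assms(2) unfolding ideal_in_def by blast
  then show ?thesis
    using assms(1) by (auto simp: coeff_sum_sum intro: sum.neutral)
qed

lemma coeff_sum_Iface:
  assumes "(f :: 'k::comm_ring_1 mpoly) \<in> Iface n r l" and "c l (r l) = 0"
  shows "coeff_sum c f = 0"
  using assms(1) unfolding Iface_def
proof (rule coeff_sum_ideal_in[rotated])
  fix g s :: "'k::comm_ring_1 mpoly"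
  assume "s \<in> minors2 n (boxA n r l) \<union> X ` boxB n r l"
  then consider j p q where "s = minor2 j p q" | p where "s = X p" "p l = r l"
    unfolding minors2_def boxB_def by blast
  then show "coeff_sum c (g * s) = 0"
  proof cases
    case 1
    then show ?thesis by (simp add: coeff_sum_mult_minor2)
  next
    case 2
    then show ?thesis using coeff_sum_mult_X[of c l p g] assms(2) by simp
  qed
qed

lemma sum_single_in_I2:
  assumes m0: "Poly_Mapping.keys m0 \<subseteq> box n r"
    and M: "\<And>m. m \<in> M \<Longrightarrow> Poly_Mapping.keys m \<subseteq> box n r \<and> multideg m = multideg m0"
    and "sum a M = 0"
  shows "(\<Sum>m\<in>M. Poly_Mapping.single m (a m)) \<in> (I2 n r :: 'k::comm_ring_1 mpoly set)"
proof -
  have "Poly_Mapping.single m (a m)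
      = Poly_Mapping.single 0 (a m) * (monomial m - monomial m0) + Poly_Mapping.single 0 (a m) * monomial m0"
    for m
    by (simp add: right_diff_distrib flip: single_eq_const_mult_monomial)
  then have "(\<Sum>m\<in>M. Poly_Mapping.single m (a m))
      = (\<Sum>m\<in>M. Poly_Mapping.single 0 (a m) * (monomial m - monomial m0))
        + Poly_Mapping.single 0 (sum a M) * monomial m0"
    by (simp add: sum.distrib sum_distrib_right single_sum)
  also have "\<dots> = (\<Sum>m\<in>M. Poly_Mapping.single 0 (a m) * (monomial m - monomial m0))"
    using assms(3) by simp
  also have "\<dots> \<in> I2 n r"
    using monomial_diff_in_I2[OF _ m0] M unfolding I2_def
    by (intro ideal_in_sum[OF subring_polyring] ideal_in_mult[OF subring_polyring]
        single_in_polyring) auto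
  finally show ?thesis .
qed

lemma I2_if_coeff_sums_vanish:
  assumes f: "f \<in> polyring (box n r)" and vanish: "\<And>c. coeff_sum c f = 0"
  shows "f \<in> I2 n r"
proof -
  let ?class = "\<lambda>c. {m \<in> Poly_Mapping.keys f. multideg m = c}"
  have "f = (\<Sum>c\<in>multideg ` Poly_Mapping.keys f. \<Sum>m\<in>?class c. Poly_Mapping.single m (Poly_Mapping.lookup f m))"
    using sum.group[of "Poly_Mapping.keys f" "multideg ` Poly_Mapping.keys f" multideg
        "\<lambda>m. Poly_Mapping.single m (Poly_Mapping.lookup f m)"]
    by (simp add: sum_single_lookup)
  also have "\<dots> \<in> I2 n r"
    unfolding I2_def
  proof (rule ideal_in_sum[OF subring_polyring])
    fix c assume "c \<in> multideg ` Poly_Mapping.keys f"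
    then obtain m0 where m0: "m0 \<in> Poly_Mapping.keys f" "multideg m0 = c"
      by blast
    have keys: "Poly_Mapping.keys m \<subseteq> box n r" if "m \<in> Poly_Mapping.keys f" for m
      using f that unfolding polyring_def by blast
    have "(\<Sum>m\<in>?class c. Poly_Mapping.lookup f m) = coeff_sum c f"
      unfolding coeff_sum_def by (simp add: sum.inter_filter when_def)
    then show "(\<Sum>m\<in>?class c. Poly_Mapping.single m (Poly_Mapping.lookup f m))
        \<in> ideal_in (polyring (box n r)) (minors2 n (box n r))"
      using keys m0 vanish by (intro sum_single_in_I2[of m0, unfolded I2_def]) auto
  qed
  finally show ?thesis .
qed

section \<open>Intersections of the face ideals\<close>

lemma Iface_subset_polyring: "Iface n r l \<subseteq> polyring (box n r)"
  unfolding Iface_def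
proof (rule ideal_in_subset[OF subring_polyring])
  have "minors2 n (boxA n r l) \<subseteq> polyring (box n r)"
    by (rule minors2_subset_polyring) (auto simp: boxA_def)
  moreover have "X ` boxB n r l \<subseteq> polyring (box n r)"
    by (auto simp: boxB_def intro: X_in_polyring)
  ultimately show "minors2 n (boxA n r l) \<union> X ` boxB n r l \<subseteq> polyring (box n r)"
    by (rule Un_least)
qed

lemma X_mult_X_in_Iface:
  assumes "p \<in> box n r" and "q \<in> box n r" and "p l = r l \<or> q l = r l"
  shows "X p * X q \<in> Iface n r l"
proof -
  have "X q * X p \<in> Iface n r l" if "p \<in> box n r" "q \<in> box n r" "p l = r l" for p q
    unfolding Iface_def using that
    by (intro ideal_in_gen_mult X_in_polyring) (auto simp: boxB_def)
  then show ?thesis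
    using assms by (metis mult.commute)
qed

lemma minor2_in_Iface:
  assumes pq: "p \<in> box n r" "q \<in> box n r" and "j \<in> {1..n}" and "l \<in> {1..n}"
  shows "minor2 j p q \<in> Iface n r l"
proof (cases "p l < r l \<and> q l < r l")
  case True
  then have "minor2 j p q \<in> minors2 n (boxA n r l)"
    using assms unfolding minors2_def boxA_def by auto
  then show ?thesis
    unfolding Iface_def by (intro ideal_in_gen[OF subring_polyring]) blast
next
  case False
  then have "p l = r l \<or> q l = r l"
    using pq \<open>l \<in> {1..n}\<close> unfolding box_def by fastforce
  then have "X p * X q \<in> Iface n r l"
    and "X (p(j := q j)) * X (q(j := p j)) \<in> Iface n r l"
    using pq box_upd[OF pq \<open>j \<in> {1..n}\<close>] box_upd[OF pq(2,1) \<open>j \<in> {1..n}\<close>]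
    by (auto intro!: X_mult_X_in_Iface)
  then show ?thesis
    unfolding minor2_def Iface_def by (rule ideal_in_diff[OF subring_polyring])
qed

lemma ideal_subset_Inter_Iface:
  assumes "L \<subseteq> {1..n}"
  shows "ideal_in (polyring (box n r)) (minors2 n (box n r) \<union> X ` (\<Inter>l\<in>L. boxB n r l))
    \<subseteq> (\<Inter>l\<in>L. Iface n r l :: 'k::comm_ring_1 mpoly set)"
proof (rule INT_greatest)
  fix l assume "l \<in> L"
  have "minors2 n (box n r) \<union> X ` (\<Inter>l\<in>L. boxB n r l) \<subseteq> (Iface n r l :: 'k mpoly set)"
  proof
    fix s :: "'k mpoly"
    assume "s \<in> minors2 n (box n r) \<union> X ` (\<Inter>l\<in>L. boxB n r l)"
    then consider j p q where "s = minor2 j p q" "j \<in> {1..n}" "p \<in> box n r" "q \<in> box n r"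
      | p where "s = X p" "p \<in> boxB n r l"
      unfolding minors2_def using \<open>l \<in> L\<close> by auto
    then show "s \<in> Iface n r l"
    proof cases
      case 1
      then show ?thesis
        using minor2_in_Iface assms \<open>l \<in> L\<close> by blast
    next
      case 2
      then show ?thesis
        unfolding Iface_def by (intro ideal_in_gen[OF subring_polyring]) blast
    qed
  qed
  then show "ideal_in (polyring (box n r)) (minors2 n (box n r) \<union> X ` (\<Inter>l\<in>L. boxB n r l))
      \<subseteq> (Iface n r l :: 'k mpoly set)"
    unfolding Iface_def by (rule ideal_in_subset_ideal_in[OF subring_polyring, folded Iface_def])
qed

lemma I2_subset_ideal_in: "I2 n r \<subseteq> ideal_in (polyring (box n r)) (minors2 n (box n r) \<union> T)"
  unfolding I2_def by (rule ideal_in_mono[OF subring_polyring]) blast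

lemma corner_of_faces:
  assumes m: "Poly_Mapping.keys m \<subseteq> box n r" and L: "L \<subseteq> {1..n}" "L \<noteq> {}"
    and meets: "\<forall>l\<in>L. 0 < multideg m l (r l)"
  obtains p where "p \<in> box n r" and "p \<in> (\<Inter>l\<in>L. boxB n r l)" and "\<And>j. 0 < multideg m j (p j)"
proof -
  have face_var: "\<exists>q\<in>Poly_Mapping.keys m. q l = r l" if "l \<in> L" for l
    using meets that multideg_pos_iff by blast
  obtain q where q: "q \<in> Poly_Mapping.keys m"
    using face_var L(2) by blast
  define p where "p j = (if j \<in> L then r j else q j)" for j
  have "1 \<le> r l" if l: "l \<in> L" for l
  proof -
    obtain q' where "q' \<in> box n r" "q' l = r l"
      using face_var[OF l] m by blast
    then show ?thesis
      using in_boxD(1)[of q' n r l] L(1) l by auto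
  qed
  moreover have "q \<in> box n r"
    using q m by blast
  ultimately have "p \<in> box n r"
    using L(1) unfolding box_def p_def by (auto dest: in_boxD)
  moreover have "0 < multideg m j (p j)" for j
    using meets q multideg_pos_iff[of m j] unfolding p_def by auto
  ultimately show ?thesis
    using that unfolding boxB_def p_def by simp
qed

lemma monomial_in_ideal_if_meets_faces:
  assumes m: "Poly_Mapping.keys m \<subseteq> box n r" and L: "L \<subseteq> {1..n}" "L \<noteq> {}"
    and meets: "\<forall>l\<in>L. 0 < multideg m l (r l)"
  shows "monomial m \<in> ideal_in (polyring (box n r)) (minors2 n (box n r) \<union> X ` (\<Inter>l\<in>L. boxB n r l))"
    (is "_ \<in> ?J")
proof -
  obtain p where p: "p \<in> box n r" and p_faces: "p \<in> (\<Inter>l\<in>L. boxB n r l)"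
    and occurs: "\<And>j. 0 < multideg m j (p j)"
    using corner_of_faces[OF assms] by blast
  obtain m' where ex: "(exchange n r)\<^sup>*\<^sup>* m (Poly_Mapping.single p 1 + m')"
    using exchanges_to_var[OF m p occurs] by blast
  have "Poly_Mapping.keys m' \<subseteq> box n r"
    using exchanges_keys[OF ex m] by (simp add: keys_add_nat)
  then have "monomial m' * X p \<in> ?J"
    using p_faces by (intro ideal_in_gen_mult monomial_in_polyring) auto
  moreover have "monomial m - monomial (Poly_Mapping.single p 1 + m') \<in> ?J"
    using monomial_diff_in_I2_if_exchanges[OF ex] I2_subset_ideal_in by blast
  ultimately have "(monomial m - monomial (Poly_Mapping.single p 1 + m')) + monomial m' * X p \<in> ?J"
    by (intro ideal_in_add[OF subring_polyring])
  then show ?thesis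
    by (simp add: monomial_add X_eq_monomial mult.commute)
qed

lemma part_missing_a_face_in_I2:
  assumes f: "(f :: 'k::comm_ring_1 mpoly) \<in> (\<Inter>l\<in>L. Iface n r l)" and "L \<noteq> {}"
  shows "(\<Sum>m\<in>Poly_Mapping.keys f - {m. \<forall>l\<in>L. 0 < multideg m l (r l)}.
            Poly_Mapping.single m (Poly_Mapping.lookup f m)) \<in> I2 n r"
    (is "(\<Sum>m\<in>?M. _) \<in> _")
proof (rule I2_if_coeff_sums_vanish)
  have "f \<in> polyring (box n r)"
    using assms Iface_subset_polyring by blast
  then show "(\<Sum>m\<in>?M. Poly_Mapping.single m (Poly_Mapping.lookup f m)) \<in> polyring (box n r)"
    by (intro sum_in_subring[OF subring_polyring] single_in_polyring) (auto simp: polyring_def)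
next
  fix c
  have coeff: "coeff_sum c (\<Sum>m\<in>?M. Poly_Mapping.single m (Poly_Mapping.lookup f m))
      = (\<Sum>m\<in>?M. Poly_Mapping.lookup f m when multideg m = c)"
    by (simp add: coeff_sum_sum)
  show "coeff_sum c (\<Sum>m\<in>?M. Poly_Mapping.single m (Poly_Mapping.lookup f m)) = 0"
  proof (cases "\<exists>l\<in>L. c l (r l) = 0")
    case True
    then obtain l where l: "l \<in> L" "c l (r l) = 0"
      by blast
    have "(\<Sum>m\<in>?M. Poly_Mapping.lookup f m when multideg m = c)
        = (\<Sum>m\<in>Poly_Mapping.keys f. Poly_Mapping.lookup f m when multideg m = c)"
      by (rule sum.mono_neutral_left) (use l in \<open>auto simp: when_def\<close>)
    also have "\<dots> = 0"
      using coeff_sum_Iface[of f n r l c] f l unfolding coeff_sum_def by blast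
    finally show ?thesis
      using coeff by simp
  next
    case False
    then show ?thesis
      unfolding coeff by (intro sum.neutral) (auto simp: when_def)
  qed
qed

lemma Inter_Iface_subset_ideal:
  assumes L: "L \<subseteq> {1..n}" "L \<noteq> {}"
  shows "(\<Inter>l\<in>L. Iface n r l :: 'k::comm_ring_1 mpoly set)
    \<subseteq> ideal_in (polyring (box n r)) (minors2 n (box n r) \<union> X ` (\<Inter>l\<in>L. boxB n r l))"
    (is "_ \<subseteq> ?J")
proof
  fix f :: "'k mpoly"
  assume f: "f \<in> (\<Inter>l\<in>L. Iface n r l)"
  let ?N = "{m. \<forall>l\<in>L. 0 < multideg m l (r l)}"
  let ?part = "\<lambda>M. \<Sum>m\<in>M. Poly_Mapping.single m (Poly_Mapping.lookup f m)"
  obtain l0 where "l0 \<in> L"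
    using L(2) by blast
  then have "f \<in> polyring (box n r)"
    using f Iface_subset_polyring by blast
  then have keys: "Poly_Mapping.keys m \<subseteq> box n r" if "m \<in> Poly_Mapping.keys f" for m
    using that unfolding polyring_def by blast
  have split: "f = ?part (Poly_Mapping.keys f \<inter> ?N) + ?part (Poly_Mapping.keys f - ?N)"
    using sum.Int_Diff[of "Poly_Mapping.keys f" "\<lambda>m. Poly_Mapping.single m (Poly_Mapping.lookup f m)" ?N]
    by (simp add: sum_single_lookup)
  have "?part (Poly_Mapping.keys f \<inter> ?N) \<in> ?J"
  proof (rule ideal_in_sum[OF subring_polyring])
    fix m assume "m \<in> Poly_Mapping.keys f \<inter> ?N"
    then have "monomial m \<in> ?J"
      using monomial_in_ideal_if_meets_faces[OF keys L] by blast
    then show "Poly_Mapping.single m (Poly_Mapping.lookup f m) \<in> ?J"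
      unfolding single_eq_const_mult_monomial[of m]
      by (rule ideal_in_mult[OF subring_polyring single_in_polyring, rotated]) simp
  qed
  moreover have "?part (Poly_Mapping.keys f - ?N) \<in> ?J"
    using part_missing_a_face_in_I2[OF f L(2)] I2_subset_ideal_in by blast
  ultimately show "f \<in> ?J"
    by (subst split) (rule ideal_in_add[OF subring_polyring])
qed

lemma Inter_Iface_eq:
  assumes "L \<subseteq> {1..n}" and "L \<noteq> {}"
  shows "(\<Inter>l\<in>L. Iface n r l :: 'k::comm_ring_1 mpoly set)
    = ideal_in (polyring (box n r)) (minors2 n (box n r) \<union> X ` (\<Inter>l\<in>L. boxB n r l))"
  using ideal_subset_Inter_Iface[OF assms(1)] Inter_Iface_subset_ideal[OF assms]
  by (rule equalityI[rotated])

theorem lemma1p1: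
  fixes n :: nat and r :: "nat \<Rightarrow> nat"
  assumes "n \<ge> 2"
    and "\<And>j. 1 \<le> j \<Longrightarrow> j \<le> n \<Longrightarrow> r j > 0"
  shows "(\<forall>l s. l \<in> {1..n} \<longrightarrow> s \<in> {1..n} \<longrightarrow> l \<noteq> s \<longrightarrow>
            (Iface n r l \<inter> Iface n r s :: 'k::field mpoly set)
              = ideal_in (polyring (box n r))
                  (minors2 n (box n r) \<union> X ` (boxB n r l \<inter> boxB n r s)))
       \<and> (\<forall>L. L \<subseteq> {1..n} \<longrightarrow> 2 \<le> card L \<longrightarrow>
            (\<Inter>l\<in>L. Iface n r l :: 'k::field mpoly set)
              = ideal_in (polyring (box n r))
                  (minors2 n (box n r) \<union> X ` (\<Inter>l\<in>L. boxB n r l)))"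
proof (intro conjI allI impI)
  fix l s assume "l \<in> {1..n}" "s \<in> {1..n}" "l \<noteq> s"
  then show "(Iface n r l \<inter> Iface n r s :: 'k mpoly set)
      = ideal_in (polyring (box n r)) (minors2 n (box n r) \<union> X ` (boxB n r l \<inter> boxB n r s))"
    using Inter_Iface_eq[of "{l, s}" n r] by simp
next
  fix L :: "nat set" assume L: "L \<subseteq> {1..n}" "2 \<le> card L"
  then have "L \<noteq> {}"
    by auto
  then show "(\<Inter>l\<in>L. Iface n r l :: 'k mpoly set)
      = ideal_in (polyring (box n r)) (minors2 n (box n r) \<union> X ` (\<Inter>l\<in>L. boxB n r l))"
    by (rule Inter_Iface_eq[OF L(1)])
qed

end
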